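(* (1) For every plane poset $P$, $\Delta_0(P)=\sum_{P_1P_2=P}P_1\otimes P_2$, the sum running over pairs of plane posets $(P_1,P_2)$ (possibly empty) with $P_1P_2=P$. (2) For any plane posets $P,Q$, $\langle P,Q\rangle_0\neq 0$ if and only if there exists $n\in\mathbb{N}$ such that $P=Q=\bullet^n$, where $\bullet^n$ is the plane poset with $n$ elements, no two of them $\leq_h$-comparable. Consequently, the kernel of the pairing $\langle-,-\rangle_0$ is the subspace spanned by the plane posets not of the form $\bullet^n$, which is a two-sided ideal of $(\mathcal{H}_{\mathcal{PP}},m)$.
   Context: A plane poset is a finite set with two partial orders $\leq_h,\leq_r$ such that two distinct elements are $\leq_h$-comparable iff they are not $\leq_r$-comparable, considered up to isomorphism; $\mathcal{H}_{\mathcal{PP}}$ is the vector space over a field $K$ with basis these classes. $PQ$ (product $m$) is the plane poset on $P\sqcup Q$ with $P,Q$ plane subposets, no $\leq_h$-comparability between $P$ and $Q$, and $x<_r y$ for $x\in P,y\in Q$. A biideal of $P$ is a subset $I$ with $x\in I$ and ($x\leq_h y$ or $x\leq_r y$) implying $y\in I$. $\Delta_0(P)=\sum_{I\text{ biideal of }P}0^{h(P\setminus I,I)}(P\setminus I)\otimes I$ where $h(A,B)=\sharp\{(x,y)\in A\times B\mid x<_h y\}$ and $0^0=1$. On a plane poset, $x\leq y$ iff ($x\leq_h y$ or $x\leq_r y$) is a total order (known fact); for $P,Q$ of equal cardinality $\theta_{P,Q}$ is the increasing bijection $P\to Q$, and $P\leq Q$ means: $\theta_{P,Q}(x)\leq_h\theta_{P,Q}(y)$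 in $Q$ implies $x\leq_h y$ in $P$. $\iota(P)=(P,\leq_r,\leq_h)$. $\langle P,Q\rangle_0=0^{\phi(P,Q)}$ (with $0^0=1$) if $\iota(P)\leq Q$ and $0$ otherwise, where $\phi(P,Q)=\sharp\{(x,y)\in P^2\mid x<_r y,\ \theta_{P,Q}(x)<_h\theta_{P,Q}(y)\}+\sharp\{(x,y)\in P^2\mid x<_h y,\ \theta_{P,Q}(x)<_r\theta_{P,Q}(y)\}$. *)

theory Defs
  imports Main
begin

record 'a plane_poset =
  pcar :: "'a set"
  hle  :: "'a \<Rightarrow> 'a \<Rightarrow> bool"
  rle  :: "'a \<Rightarrow> 'a \<Rightarrow> bool"

definition plane_poset :: "'a plane_poset \<Rightarrow> bool" where
  "plane_poset P \<longleftrightarrow>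
     finite (pcar P) \<and>
     (\<forall>x y. hle P x y \<longrightarrow> x \<in> pcar P \<and> y \<in> pcar P) \<and>
     (\<forall>x y. rle P x y \<longrightarrow> x \<in> pcar P \<and> y \<in> pcar P) \<and>
     partial_order_on (pcar P) {(x, y). hle P x y} \<and>
     partial_order_on (pcar P) {(x, y). rle P x y} \<and>
     (\<forall>x\<in>pcar P. \<forall>y\<in>pcar P. x \<noteq> y \<longrightarrow>
        ((hle P x y \<or> hle P y x) \<longleftrightarrow> \<not> (rle P x y \<or> rle P y x)))"

definition pp_iso :: "'a plane_poset \<Rightarrow> 'b plane_poset \<Rightarrow> bool" where
  "pp_iso P Q \<longleftrightarrow> (\<exists>f. bij_betw f (pcar P) (pcar Q) \<and>
     (\<forall>x\<in>pcar P. \<forall>y\<in>pcar P. (hle P x y \<longleftrightarrow> hle Q (f x) (f y)) \<and>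
                               (rle P x y \<longleftrightarrow> rle Q (f x) (f y))))"

definition pp_prod :: "'a plane_poset \<Rightarrow> 'b plane_poset \<Rightarrow> ('a + 'b) plane_poset" where
  "pp_prod P Q = \<lparr> pcar = Inl ` pcar P \<union> Inr ` pcar Q,
     hle = (\<lambda>u v. case (u, v) of
              (Inl x, Inl y) \<Rightarrow> hle P x y
            | (Inr x, Inr y) \<Rightarrow> hle Q x y
            | _ \<Rightarrow> False),
     rle = (\<lambda>u v. case (u, v) of
              (Inl x, Inl y) \<Rightarrow> rle P x y
            | (Inr x, Inr y) \<Rightarrow> rle Q x y
            | (Inl x, Inr y) \<Rightarrow> x \<in> pcar P \<and> y \<in> pcar Q
            | (Inr x, Inl y) \<Rightarrow> False) \<rparr>"

definition restr :: "'a plane_poset \<Rightarrow> 'a set \<Rightarrow> 'a plane_poset" where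
  "restr P S = \<lparr> pcar = pcar P \<inter> S,
     hle = (\<lambda>x y. hle P x y \<and> x \<in> S \<and> y \<in> S),
     rle = (\<lambda>x y. rle P x y \<and> x \<in> S \<and> y \<in> S) \<rparr>"

definition biideal :: "'a plane_poset \<Rightarrow> 'a set \<Rightarrow> bool" where
  "biideal P I \<longleftrightarrow> I \<subseteq> pcar P \<and>
     (\<forall>x\<in>I. \<forall>y\<in>pcar P. (hle P x y \<or> rle P x y) \<longrightarrow> y \<in> I)"

definition hcount :: "'a plane_poset \<Rightarrow> 'a set \<Rightarrow> 'a set \<Rightarrow> nat" where
  "hcount P A B = card {(x, y). x \<in> A \<and> y \<in> B \<and> hle P x y \<and> x \<noteq> y}"

text \<open>The total order x \<le> y iff x \<le>_h y or x \<le>_r y, the rank in it,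
  and the increasing bijection theta.\<close>
definition tle :: "'a plane_poset \<Rightarrow> 'a \<Rightarrow> 'a \<Rightarrow> bool" where
  "tle P x y \<longleftrightarrow> hle P x y \<or> rle P x y"

definition rank :: "'a plane_poset \<Rightarrow> 'a \<Rightarrow> nat" where
  "rank P x = card {y \<in> pcar P. tle P y x \<and> y \<noteq> x}"

definition theta :: "'a plane_poset \<Rightarrow> 'b plane_poset \<Rightarrow> 'a \<Rightarrow> 'b" where
  "theta P Q x = (THE y. y \<in> pcar Q \<and> rank Q y = rank P x)"

definition iota :: "'a plane_poset \<Rightarrow> 'a plane_poset" where
  "iota P = \<lparr> pcar = pcar P, hle = rle P, rle = hle P \<rparr>"

definition pp_le :: "'a plane_poset \<Rightarrow> 'b plane_poset \<Rightarrow> bool" where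
  "pp_le P Q \<longleftrightarrow> card (pcar P) = card (pcar Q) \<and>
     (\<forall>x\<in>pcar P. \<forall>y\<in>pcar P.
        hle Q (theta P Q x) (theta P Q y) \<longrightarrow> hle P x y)"

definition phi :: "'a plane_poset \<Rightarrow> 'b plane_poset \<Rightarrow> nat" where
  "phi P Q =
     card {(x, y). x \<in> pcar P \<and> y \<in> pcar P \<and> rle P x y \<and> x \<noteq> y \<and>
            hle Q (theta P Q x) (theta P Q y) \<and> theta P Q x \<noteq> theta P Q y}
   + card {(x, y). x \<in> pcar P \<and> y \<in> pcar P \<and> hle P x y \<and> x \<noteq> y \<and>
            rle Q (theta P Q x) (theta P Q y) \<and> theta P Q x \<noteq> theta P Q y}"

definition pairing0 :: "'a plane_poset \<Rightarrow> 'b plane_poset \<Rightarrow> 'k::field" where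
  "pairing0 P Q = (if pp_le (iota P) Q then (0::'k) ^ phi P Q else 0)"

definition dots :: "nat \<Rightarrow> nat plane_poset" where
  "dots n = \<lparr> pcar = {0..<n},
     hle = (\<lambda>x y. x = y \<and> x < n),
     rle = (\<lambda>x y. x \<le> y \<and> y < n) \<rparr>"

definition is_dot :: "'a plane_poset \<Rightarrow> bool" where
  "is_dot P \<longleftrightarrow> (\<exists>n. pp_iso P (dots n))"

text \<open>Canonical representatives of isomorphism classes: carrier {0..<n},
  with the natural order being the total order of the plane poset.
  The basis of H_PP is indexed by these.\<close>
definition canonical :: "nat plane_poset \<Rightarrow> bool" where
  "canonical C \<longleftrightarrow> plane_poset C \<and> pcar C = {0..<card (pcar C)} \<and>
     (\<forall>x\<in>pcar C. \<forall>y\<in>pcar C. x \<le> y \<longrightarrow> tle C x y)"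

definition canon :: "'a plane_poset \<Rightarrow> nat plane_poset" where
  "canon R = (THE C. canonical C \<and> pp_iso C R)"

text \<open>H_PP over K: finitely supported coefficient functions on the basis.\<close>
definition supp :: "(nat plane_poset \<Rightarrow> 'k::field) \<Rightarrow> nat plane_poset set" where
  "supp v = {P. v P \<noteq> 0}"

definition hpp :: "(nat plane_poset \<Rightarrow> 'k::field) set" where
  "hpp = {v. finite (supp v) \<and> (\<forall>P \<in> supp v. canonical P)}"

definition hmult :: "(nat plane_poset \<Rightarrow> 'k::field) \<Rightarrow> (nat plane_poset \<Rightarrow> 'k)
                      \<Rightarrow> (nat plane_poset \<Rightarrow> 'k)" where
  "hmult v w = (\<lambda>R. \<Sum>P\<in>supp v. \<Sum>Q\<in>supp w.
                    if canon (pp_prod P Q) = R then v P * w Q else 0)"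

definition pairing0_ext :: "(nat plane_poset \<Rightarrow> 'k::field) \<Rightarrow> (nat plane_poset \<Rightarrow> 'k) \<Rightarrow> 'k" where
  "pairing0_ext v w = (\<Sum>P\<in>supp v. \<Sum>Q\<in>supp w. v P * w Q * pairing0 P Q)"

definition kernel0 :: "(nat plane_poset \<Rightarrow> 'k::field) set" where
  "kernel0 = {v \<in> hpp. \<forall>w\<in>hpp. pairing0_ext v w = 0 \<and> pairing0_ext w v = 0}"

definition span_nondots :: "(nat plane_poset \<Rightarrow> 'k::field) set" where
  "span_nondots = {v. \<exists>S c. finite S \<and> (\<forall>P\<in>S. canonical P \<and> \<not> is_dot P) \<and>
       v = (\<lambda>R. \<Sum>P\<in>S. c P * (if R = P then 1 else 0))}"

text \<open>Elements of H_PP \<otimes> H_PP as coefficient functions on pairs of basis elements.\<close>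
definition delta0 :: "'a plane_poset \<Rightarrow> (nat plane_poset \<times> nat plane_poset \<Rightarrow> 'k::field)" where
  "delta0 P = (\<lambda>(X, Y). \<Sum>I\<in>{I. biideal P I}.
       if canon (restr P (pcar P - I)) = X \<and> canon (restr P I) = Y
       then (0::'k) ^ hcount P (pcar P - I) I else 0)"

definition deconc :: "'a plane_poset \<Rightarrow> (nat plane_poset \<times> nat plane_poset \<Rightarrow> 'k::field)" where
  "deconc P = (\<lambda>XY. \<Sum>P12\<in>{(P1, P2). canonical P1 \<and> canonical P2 \<and> pp_iso (pp_prod P1 P2) P}.
       if XY = P12 then 1 else 0)"

end

theory Submission
  imports Defs
begin

text \<open>
  In a plane poset the relation x \<le>_h y or x \<le>_r y is a total order, so the
  rank of an element in it gives canonical representatives of isomorphism classes and the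
  increasing bijection theta. A biideal I contributes to Delta_0 only if no element of P - I
  lies h-below an element of I; by the defining dichotomy of plane posets this means that
  every element of P - I lies r-below every element of I, i.e. P = (P - I) I. Such cuts form a
  chain, hence are determined by the size of P - I, and a factorisation P = P1 P2 is recovered
  from the cut consisting of the image of P2.

  If the pairing of P and Q is nonzero, then phi(P, Q) = 0 and iota(P) \<le> Q. A strict
  h-relation of P is mapped by theta to a strict relation of Q, which is either an h-relation
  (pulled back to an r-relation of P by iota(P) \<le> Q) or an r-relation (counted by phi);
  a strict h-relation of Q pulls back to an r-relation of P counted by phi. So both P and Q
  are h-antichains of the same size, i.e. copies of the same bullet^n, and conversely then the
  pairing is 1. Thus the pairing is the identity on the bullet^n and zero elsewhere, which gives
  the kernel; the kernel is an ideal because a product of plane posets is an h-antichain only if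
  both factors are.
\<close>

section \<open>Plane posets and their total order\<close>

lemma plane_posetI:
  assumes "finite (pcar P)"
    and "\<And>x y. hle P x y \<Longrightarrow> x \<in> pcar P \<and> y \<in> pcar P"
    and "\<And>x y. rle P x y \<Longrightarrow> x \<in> pcar P \<and> y \<in> pcar P"
    and "\<And>x. x \<in> pcar P \<Longrightarrow> hle P x x" and "\<And>x. x \<in> pcar P \<Longrightarrow> rle P x x"
    and "\<And>x y z. hle P x y \<Longrightarrow> hle P y z \<Longrightarrow> hle P x z"
    and "\<And>x y z. rle P x y \<Longrightarrow> rle P y z \<Longrightarrow> rle P x z"
    and "\<And>x y. hle P x y \<Longrightarrow> hle P y x \<Longrightarrow> x = y"
    and "\<And>x y. rle P x y \<Longrightarrow> rle P y x \<Longrightarrow> x = y"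
    and "\<And>x y. x \<in> pcar P \<Longrightarrow> y \<in> pcar P \<Longrightarrow> x \<noteq> y \<Longrightarrow>
           (hle P x y \<or> hle P y x) \<longleftrightarrow> \<not> (rle P x y \<or> rle P y x)"
  shows "plane_poset P"
  unfolding plane_poset_def partial_order_on_def preorder_on_def refl_on_def trans_def antisym_def
  using assms(1-3) by (intro conjI; blast intro: assms(4-9) dest: assms(10))

context
  fixes P :: "'a plane_poset"
  assumes P: "plane_poset P"
begin

lemma plane_poset_finite: "finite (pcar P)"
  using P unfolding plane_poset_def by blast

lemma hle_carrier: "hle P x y \<Longrightarrow> x \<in> pcar P \<and> y \<in> pcar P"
  using P unfolding plane_poset_def by blast

lemma rle_carrier: "rle P x y \<Longrightarrow> x \<in> pcar P \<and> y \<in> pcar P"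
  using P unfolding plane_poset_def by blast

lemma hle_refl: "x \<in> pcar P \<Longrightarrow> hle P x x"
  using P unfolding plane_poset_def partial_order_on_def preorder_on_def refl_on_def by blast

lemma rle_refl: "x \<in> pcar P \<Longrightarrow> rle P x x"
  using P unfolding plane_poset_def partial_order_on_def preorder_on_def refl_on_def by blast

lemma hle_trans: "hle P x y \<Longrightarrow> hle P y z \<Longrightarrow> hle P x z"
  using P unfolding plane_poset_def partial_order_on_def preorder_on_def trans_def by blast

lemma rle_trans: "rle P x y \<Longrightarrow> rle P y z \<Longrightarrow> rle P x z"
  using P unfolding plane_poset_def partial_order_on_def preorder_on_def trans_def by blast

lemma hle_antisym: "hle P x y \<Longrightarrow> hle P y x \<Longrightarrow> x = y"
  using P unfolding plane_poset_def partial_order_on_def antisym_def by blast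

lemma rle_antisym: "rle P x y \<Longrightarrow> rle P y x \<Longrightarrow> x = y"
  using P unfolding plane_poset_def partial_order_on_def antisym_def by blast

lemma hle_comparable_iff:
  "x \<in> pcar P \<Longrightarrow> y \<in> pcar P \<Longrightarrow> x \<noteq> y \<Longrightarrow>
     (hle P x y \<or> hle P y x) \<longleftrightarrow> \<not> (rle P x y \<or> rle P y x)"
  using P unfolding plane_poset_def by blast

lemma tle_carrier: "tle P x y \<Longrightarrow> x \<in> pcar P \<and> y \<in> pcar P"
  unfolding tle_def using hle_carrier rle_carrier by blast

lemma tle_refl: "x \<in> pcar P \<Longrightarrow> tle P x x"
  unfolding tle_def using hle_refl by blast

lemma tle_total: "x \<in> pcar P \<Longrightarrow> y \<in> pcar P \<Longrightarrow> tle P x y \<or> tle P y x"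
  unfolding tle_def using hle_comparable_iff hle_refl by blast

lemma tle_antisym: "tle P x y \<Longrightarrow> tle P y x \<Longrightarrow> x = y"
  unfolding tle_def using hle_comparable_iff hle_antisym rle_antisym hle_carrier rle_carrier by blast

lemma hle_imp_not_rle:
  "hle P x y \<Longrightarrow> x \<noteq> y \<Longrightarrow> \<not> rle P x y \<and> \<not> rle P y x"
  using hle_comparable_iff hle_carrier by blast

lemma tle_trans:
  assumes xy: "tle P x y" and yz: "tle P y z"
  shows "tle P x z"
proof (rule ccontr)
  assume xz: "\<not> tle P x z"
  have car: "x \<in> pcar P" "z \<in> pcar P"
    using xy yz tle_carrier by auto
  have distinct: "x \<noteq> y" "y \<noteq> z"
    using xy yz xz by auto
  have "tle P z x" using tle_total[OF car] xz by blast
  \<comment> \<open>Every combination of h- and r-steps closes a cycle in which two distinct elements become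
    comparable for both orders.\<close>
  then show False
    using xy yz xz distinct hle_trans[of x y z] rle_trans[of x y z]
      hle_trans[of z x y] rle_trans[of y z x] hle_trans[of y z x] rle_trans[of z x y]
      hle_imp_not_rle[of x y] hle_imp_not_rle[of y z] hle_imp_not_rle[of z y] hle_imp_not_rle[of y x]
    unfolding tle_def by blast
qed

lemma rank_less:
  assumes "tle P x y" "x \<noteq> y"
  shows "rank P x < rank P y"
proof -
  have "{z \<in> pcar P. tle P z x \<and> z \<noteq> x} \<subset> {z \<in> pcar P. tle P z y \<and> z \<noteq> y}"
    using assms tle_carrier tle_trans tle_antisym by blast
  then show ?thesis
    unfolding rank_def using plane_poset_finite by (auto intro: psubset_card_mono)
qed

lemma rank_le_iff: "x \<in> pcar P \<Longrightarrow> y \<in> pcar P \<Longrightarrow> rank P x \<le> rank P y \<longleftrightarrow> tle P x y"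
  using rank_less tle_total tle_refl by (metis leD le_eq_less_or_eq)

lemma inj_on_rank: "inj_on (rank P) (pcar P)"
  by (metis inj_onI nat_less_le rank_less tle_total)

lemma rank_bij: "bij_betw (rank P) (pcar P) {0..<card (pcar P)}"
proof -
  have "rank P x < card (pcar P)" if "x \<in> pcar P" for x
    unfolding rank_def using that plane_poset_finite
    by (intro psubset_card_mono) auto
  then have "rank P ` pcar P \<subseteq> {0..<card (pcar P)}" by auto
  moreover have "card (rank P ` pcar P) = card {0..<card (pcar P)}"
    using card_image inj_on_rank by fastforce
  ultimately show ?thesis
    unfolding bij_betw_def using inj_on_rank by (simp add: card_subset_eq)
qed

end

section \<open>Isomorphisms and canonical representatives\<close>

definition pp_isomorphism :: "('a \<Rightarrow> 'b) \<Rightarrow> 'a plane_poset \<Rightarrow> 'b plane_poset \<Rightarrow> bool" where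
  "pp_isomorphism f P Q \<longleftrightarrow> bij_betw f (pcar P) (pcar Q) \<and>
     (\<forall>x\<in>pcar P. \<forall>y\<in>pcar P. (hle P x y \<longleftrightarrow> hle Q (f x) (f y)) \<and> (rle P x y \<longleftrightarrow> rle Q (f x) (f y)))"

lemma pp_iso_iff_isomorphism: "pp_iso P Q \<longleftrightarrow> (\<exists>f. pp_isomorphism f P Q)"
  unfolding pp_iso_def pp_isomorphism_def ..

lemma pp_isomorphism_id: "pp_isomorphism id P P"
  unfolding pp_isomorphism_def by simp

lemma pp_isomorphism_inv:
  assumes f: "pp_isomorphism f P Q"
  shows "pp_isomorphism (inv_into (pcar P) f) Q P"
proof -
  let ?g = "inv_into (pcar P) f"
  have bij: "bij_betw f (pcar P) (pcar Q)" using f unfolding pp_isomorphism_def by blast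
  have "?g x \<in> pcar P" "f (?g x) = x" if "x \<in> pcar Q" for x
    using bij that by (auto simp: bij_betw_inv_into_right bij_betwE[OF bij_betw_inv_into])
  then show ?thesis
    using f bij_betw_inv_into[OF bij] unfolding pp_isomorphism_def by metis
qed

lemma pp_isomorphism_comp:
  "pp_isomorphism f P Q \<Longrightarrow> pp_isomorphism g Q R \<Longrightarrow> pp_isomorphism (g \<circ> f) P R"
  unfolding pp_isomorphism_def by (auto intro: bij_betw_trans dest: bij_betwE)

lemma pp_iso_refl: "pp_iso P P"
  using pp_isomorphism_id pp_iso_iff_isomorphism by blast

lemma pp_iso_sym: "pp_iso P Q \<Longrightarrow> pp_iso Q P"
  unfolding pp_iso_iff_isomorphism using pp_isomorphism_inv by blast

lemma pp_iso_trans: "pp_iso P Q \<Longrightarrow> pp_iso Q R \<Longrightarrow> pp_iso P R"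
  unfolding pp_iso_iff_isomorphism using pp_isomorphism_comp by blast

lemma pp_iso_card: "pp_iso P Q \<Longrightarrow> card (pcar P) = card (pcar Q)"
  unfolding pp_iso_def using bij_betw_same_card by blast

lemma pp_isomorphism_tle:
  "pp_isomorphism f P Q \<Longrightarrow> x \<in> pcar P \<Longrightarrow> y \<in> pcar P \<Longrightarrow> tle Q (f x) (f y) \<longleftrightarrow> tle P x y"
  unfolding pp_isomorphism_def tle_def by blast

lemma pp_isomorphism_rank:
  assumes f: "pp_isomorphism f P Q" and x: "x \<in> pcar P"
  shows "rank Q (f x) = rank P x"
proof -
  have bij: "bij_betw f (pcar P) (pcar Q)" using f unfolding pp_isomorphism_def by blast
  let ?below = "\<lambda>P x. {y \<in> pcar P. tle P y x \<and> y \<noteq> x}"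
  have "?below Q (f x) = f ` ?below P x"
  proof
    show "f ` ?below P x \<subseteq> ?below Q (f x)"
      using bij x pp_isomorphism_tle[OF f _ x] by (auto simp: bij_betw_def inj_on_def)
  next
    show "?below Q (f x) \<subseteq> f ` ?below P x"
    proof
      fix y assume y: "y \<in> ?below Q (f x)"
      then obtain z where "z \<in> pcar P" "y = f z"
        using bij unfolding bij_betw_def by blast
      with y show "y \<in> f ` ?below P x"
        using pp_isomorphism_tle[OF f _ x] by blast
    qed
  qed
  moreover have "inj_on f (?below P x)"
    using bij unfolding bij_betw_def by (auto intro: inj_on_subset)
  ultimately show ?thesis unfolding rank_def by (simp add: card_image)
qed

lemma pp_isomorphism_restr:
  assumes f: "pp_isomorphism f P Q" and S: "S \<subseteq> pcar P"
  shows "pp_isomorphism f (restr P S) (restr Q (f ` S))"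
proof -
  have bij: "bij_betw f (pcar P) (pcar Q)" using f unfolding pp_isomorphism_def by blast
  have "pcar (restr P S) = S" "pcar (restr Q (f ` S)) = f ` S"
    using S bij_betw_imp_surj_on[OF bij] by (auto simp: restr_def)
  moreover have "bij_betw f S (f ` S)"
    by (rule bij_betw_subset[OF bij S]) simp
  ultimately show ?thesis
    using f S unfolding pp_isomorphism_def by (simp add: restr_def subset_iff)
qed

lemma plane_poset_isomorphism_transfer:
  assumes f: "pp_isomorphism f P Q" and Q: "plane_poset Q"
    and "\<And>x y. hle P x y \<Longrightarrow> x \<in> pcar P \<and> y \<in> pcar P"
    and "\<And>x y. rle P x y \<Longrightarrow> x \<in> pcar P \<and> y \<in> pcar P"
  shows "plane_poset P"
proof -
  have bij: "bij_betw f (pcar P) (pcar Q)"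
    and rel: "\<And>x y. x \<in> pcar P \<Longrightarrow> y \<in> pcar P \<Longrightarrow>
                (hle P x y \<longleftrightarrow> hle Q (f x) (f y)) \<and> (rle P x y \<longleftrightarrow> rle Q (f x) (f y))"
    using f unfolding pp_isomorphism_def by auto
  have inj: "\<And>x y. x \<in> pcar P \<Longrightarrow> y \<in> pcar P \<Longrightarrow> f x = f y \<Longrightarrow> x = y"
    and im: "\<And>x. x \<in> pcar P \<Longrightarrow> f x \<in> pcar Q"
    using bij by (auto simp: bij_betw_def inj_on_def)
  show ?thesis
  proof (rule plane_posetI)
    show "finite (pcar P)"
      using bij plane_poset_finite[OF Q] bij_betw_finite by blast
  next
    fix x y z
    show "x \<in> pcar P \<Longrightarrow> hle P x x" "x \<in> pcar P \<Longrightarrow> rle P x x"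
      using rel im hle_refl[OF Q] rle_refl[OF Q] by blast+
    show "hle P x y \<Longrightarrow> hle P y z \<Longrightarrow> hle P x z" "rle P x y \<Longrightarrow> rle P y z \<Longrightarrow> rle P x z"
      using rel assms(3,4) hle_trans[OF Q] rle_trans[OF Q] by meson+
    show "hle P x y \<Longrightarrow> hle P y x \<Longrightarrow> x = y" "rle P x y \<Longrightarrow> rle P y x \<Longrightarrow> x = y"
      using rel inj assms(3,4) hle_antisym[OF Q] rle_antisym[OF Q] by meson+
    show "x \<in> pcar P \<Longrightarrow> y \<in> pcar P \<Longrightarrow> x \<noteq> y \<Longrightarrow>
           (hle P x y \<or> hle P y x) \<longleftrightarrow> \<not> (rle P x y \<or> rle P y x)"
      using rel inj im hle_comparable_iff[OF Q] by meson
  qed (use assms(3,4) in blast)+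
qed

lemma canonical_plane_poset: "canonical C \<Longrightarrow> plane_poset C"
  unfolding canonical_def by blast

lemma rank_canonical:
  assumes C: "canonical C" and i: "i \<in> pcar C"
  shows "rank C i = i"
proof -
  have P: "plane_poset C" and car: "pcar C = {0..<card (pcar C)}"
    and le: "\<And>x y. x \<in> pcar C \<Longrightarrow> y \<in> pcar C \<Longrightarrow> x \<le> y \<Longrightarrow> tle C x y"
    using C unfolding canonical_def by auto
  have "{y \<in> pcar C. tle C y i \<and> y \<noteq> i} = {0..<i}"
  proof (intro set_eqI iffI)
    fix y assume "y \<in> {y \<in> pcar C. tle C y i \<and> y \<noteq> i}"
    then show "y \<in> {0..<i}"
      using le[OF i, of y] tle_antisym[OF P, of y i] by (cases "y < i") auto
  next
    fix y assume "y \<in> {0..<i}"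
    moreover have "y \<in> pcar C"
      using calculation i by (subst car, subst (asm) car) auto
    ultimately show "y \<in> {y \<in> pcar C. tle C y i \<and> y \<noteq> i}"
      using le[OF _ i] by auto
  qed
  then show ?thesis unfolding rank_def by simp
qed

lemma plane_poset_eqI:
  assumes P: "plane_poset P" and Q: "plane_poset Q" and car: "pcar P = pcar Q"
    and rel: "\<And>x y. x \<in> pcar P \<Longrightarrow> y \<in> pcar P \<Longrightarrow>
                 (hle P x y \<longleftrightarrow> hle Q x y) \<and> (rle P x y \<longleftrightarrow> rle Q x y)"
  shows "P = Q"
proof (rule plane_poset.equality)
  show "hle P = hle Q"
    using rel car hle_carrier[OF P] hle_carrier[OF Q] by (intro ext) metis
  show "rle P = rle Q"
    using rel car rle_carrier[OF P] rle_carrier[OF Q] by (intro ext) metis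
qed (simp_all add: car)

lemma canonical_unique:
  assumes C: "canonical C" and D: "canonical D" and iso: "pp_iso C D"
  shows "C = D"
proof -
  obtain f where f: "pp_isomorphism f C D"
    using iso pp_iso_iff_isomorphism by blast
  have car: "pcar C = pcar D"
    using C D pp_iso_card[OF iso] unfolding canonical_def by metis
  \<comment> \<open>An isomorphism preserves ranks, and in a canonical poset the rank of i is i.\<close>
  have "f i = i" if i: "i \<in> pcar C" for i
  proof -
    have "f i \<in> pcar D" using f i unfolding pp_isomorphism_def by (blast dest: bij_betwE)
    then show ?thesis
      using pp_isomorphism_rank[OF f i] rank_canonical[OF C i] rank_canonical[OF D] by simp
  qed
  then show ?thesis
    using f car canonical_plane_poset[OF C] canonical_plane_poset[OF D]
    unfolding pp_isomorphism_def by (intro plane_poset_eqI) auto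
qed

lemma canonical_exists:
  assumes R: "plane_poset R"
  shows "\<exists>C. canonical C \<and> pp_iso C R"
proof -
  define n where "n = card (pcar R)"
  define ri where "ri = inv_into (pcar R) (rank R)"
  have rank_R: "bij_betw (rank R) (pcar R) {0..<n}"
    using rank_bij[OF R] n_def by simp
  have ri_bij: "bij_betw ri {0..<n} (pcar R)"
    using rank_R bij_betw_inv_into ri_def by blast
  have rank_ri: "rank R (ri i) = i" if "i < n" for i
    using rank_R that unfolding ri_def by (simp add: bij_betw_inv_into_right)
  define C where "C = \<lparr> pcar = {0..<n},
      hle = (\<lambda>i j. i < n \<and> j < n \<and> hle R (ri i) (ri j)),
      rle = (\<lambda>i j. i < n \<and> j < n \<and> rle R (ri i) (ri j)) \<rparr>"
  have iso: "pp_isomorphism ri C R"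
    using ri_bij unfolding pp_isomorphism_def C_def by simp
  have "plane_poset C"
    by (rule plane_poset_isomorphism_transfer[OF iso R]) (simp_all add: C_def)
  moreover have "tle C i j" if "i \<in> pcar C" "j \<in> pcar C" "i \<le> j" for i j
  proof -
    have "i < n" "j < n" using that unfolding C_def by auto
    then show ?thesis
      using that pp_isomorphism_tle[OF iso] rank_le_iff[OF R] rank_ri bij_betwE[OF ri_bij]
      by (metis atLeastLessThan_iff zero_le)
  qed
  moreover have "pcar C = {0..<card (pcar C)}" unfolding C_def by simp
  ultimately have "canonical C" unfolding canonical_def by blast
  then show ?thesis using iso pp_iso_iff_isomorphism by blast
qed

lemma canon_eqI: "canonical C \<Longrightarrow> pp_iso C R \<Longrightarrow> canon R = C"
  unfolding canon_def
  by (rule the_equality) (auto intro: canonical_unique pp_iso_trans pp_iso_sym)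

lemma canonical_canon: "plane_poset R \<Longrightarrow> canonical (canon R)"
  using canonical_exists canon_eqI by metis

lemma pp_iso_canon: "plane_poset R \<Longrightarrow> pp_iso (canon R) R"
  using canonical_exists canon_eqI by metis

section \<open>The plane posets bullet^n\<close>

definition h_antichain :: "'a plane_poset \<Rightarrow> bool" where
  "h_antichain P \<longleftrightarrow> (\<forall>x y. hle P x y \<longrightarrow> x = y)"

lemma plane_poset_dots: "plane_poset (dots n)"
  by (rule plane_posetI) (auto simp: dots_def)

lemma canonical_dots: "canonical (dots n)"
  unfolding canonical_def using plane_poset_dots by (auto simp: dots_def tle_def)

lemma pp_iso_dots_iff:
  assumes P: "plane_poset P"
  shows "pp_iso P (dots n) \<longleftrightarrow> card (pcar P) = n \<and> h_antichain P"
proof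
  assume "pp_iso P (dots n)"
  then obtain f where f: "pp_isomorphism f P (dots n)"
    using pp_iso_iff_isomorphism by blast
  have "x = y" if "hle P x y" for x y
  proof -
    have "x \<in> pcar P" "y \<in> pcar P" using hle_carrier[OF P that] by auto
    then show ?thesis
      using f that unfolding pp_isomorphism_def bij_betw_def inj_on_def by (auto simp: dots_def)
  qed
  then show "card (pcar P) = n \<and> h_antichain P"
    using pp_iso_card[OF \<open>pp_iso P (dots n)\<close>] unfolding h_antichain_def by (simp add: dots_def)
next
  assume "card (pcar P) = n \<and> h_antichain P"
  then have n: "n = card (pcar P)" and anti: "\<And>x y. hle P x y \<Longrightarrow> x = y"
    unfolding h_antichain_def by auto
  have lt: "rank P x < n" if "x \<in> pcar P" for x
    using that rank_bij[OF P] n by (auto dest: bij_betwE)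
  have "hle P x y \<longleftrightarrow> hle (dots n) (rank P x) (rank P y)"
    if "x \<in> pcar P" "y \<in> pcar P" for x y
    using that anti hle_refl[OF P] inj_on_rank[OF P] lt by (auto simp: dots_def inj_on_eq_iff)
  moreover have "rle P x y \<longleftrightarrow> rle (dots n) (rank P x) (rank P y)"
    if "x \<in> pcar P" "y \<in> pcar P" for x y
    using that anti rle_refl[OF P] rank_le_iff[OF P] lt unfolding tle_def dots_def by auto
  ultimately have "pp_isomorphism (rank P) P (dots n)"
    using rank_bij[OF P] n unfolding pp_isomorphism_def by (simp add: dots_def)
  then show "pp_iso P (dots n)" using pp_iso_iff_isomorphism by blast
qed

lemma is_dot_iff_h_antichain: "plane_poset P \<Longrightarrow> is_dot P \<longleftrightarrow> h_antichain P"
  unfolding is_dot_def using pp_iso_dots_iff by blast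

section \<open>Products and restrictions\<close>

lemma pcar_pp_prod: "pcar (pp_prod P Q) = Inl ` pcar P \<union> Inr ` pcar Q"
  by (simp add: pp_prod_def)

lemma hle_pp_prod [simp]:
  "hle (pp_prod P Q) (Inl x) (Inl y) = hle P x y"
  "hle (pp_prod P Q) (Inr a) (Inr b) = hle Q a b"
  "hle (pp_prod P Q) (Inl x) (Inr b) = False"
  "hle (pp_prod P Q) (Inr a) (Inl y) = False"
  by (simp_all add: pp_prod_def)

lemma rle_pp_prod [simp]:
  "rle (pp_prod P Q) (Inl x) (Inl y) = rle P x y"
  "rle (pp_prod P Q) (Inr a) (Inr b) = rle Q a b"
  "rle (pp_prod P Q) (Inl x) (Inr b) = (x \<in> pcar P \<and> b \<in> pcar Q)"
  "rle (pp_prod P Q) (Inr a) (Inl y) = False"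
  by (simp_all add: pp_prod_def)

lemma plane_poset_pp_prod:
  assumes P: "plane_poset P" and Q: "plane_poset Q"
  shows "plane_poset (pp_prod P Q)"
proof (rule plane_posetI)
  show "finite (pcar (pp_prod P Q))"
    using plane_poset_finite[OF P] plane_poset_finite[OF Q] by (simp add: pcar_pp_prod)
next
  fix u v w :: "'a + 'b"
  show "hle (pp_prod P Q) u v \<Longrightarrow> u \<in> pcar (pp_prod P Q) \<and> v \<in> pcar (pp_prod P Q)"
    by (cases u; cases v) (auto simp: pcar_pp_prod dest: hle_carrier[OF P] hle_carrier[OF Q])
  show "rle (pp_prod P Q) u v \<Longrightarrow> u \<in> pcar (pp_prod P Q) \<and> v \<in> pcar (pp_prod P Q)"
    by (cases u; cases v) (auto simp: pcar_pp_prod dest: rle_carrier[OF P] rle_carrier[OF Q])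
  show "u \<in> pcar (pp_prod P Q) \<Longrightarrow> hle (pp_prod P Q) u u"
    "u \<in> pcar (pp_prod P Q) \<Longrightarrow> rle (pp_prod P Q) u u"
    using hle_refl[OF P] hle_refl[OF Q] rle_refl[OF P] rle_refl[OF Q] by (auto simp: pcar_pp_prod)
  show "hle (pp_prod P Q) u v \<Longrightarrow> hle (pp_prod P Q) v w \<Longrightarrow> hle (pp_prod P Q) u w"
    by (cases u; cases v; cases w) (auto intro: hle_trans[OF P] hle_trans[OF Q])
  show "rle (pp_prod P Q) u v \<Longrightarrow> rle (pp_prod P Q) v w \<Longrightarrow> rle (pp_prod P Q) u w"
    by (cases u; cases v; cases w)
      (auto intro: rle_trans[OF P] rle_trans[OF Q] dest: rle_carrier[OF P] rle_carrier[OF Q])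
  show "hle (pp_prod P Q) u v \<Longrightarrow> hle (pp_prod P Q) v u \<Longrightarrow> u = v"
    by (cases u; cases v) (auto intro: hle_antisym[OF P] hle_antisym[OF Q])
  show "rle (pp_prod P Q) u v \<Longrightarrow> rle (pp_prod P Q) v u \<Longrightarrow> u = v"
    by (cases u; cases v) (auto intro: rle_antisym[OF P] rle_antisym[OF Q])
  show "u \<in> pcar (pp_prod P Q) \<Longrightarrow> v \<in> pcar (pp_prod P Q) \<Longrightarrow> u \<noteq> v \<Longrightarrow>
      (hle (pp_prod P Q) u v \<or> hle (pp_prod P Q) v u) \<longleftrightarrow>
      \<not> (rle (pp_prod P Q) u v \<or> rle (pp_prod P Q) v u)"
    using hle_comparable_iff[OF P] hle_comparable_iff[OF Q]
    by (cases u; cases v) (auto simp: pcar_pp_prod)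
qed

lemma plane_poset_restr:
  assumes P: "plane_poset P"
  shows "plane_poset (restr P S)"
proof (rule plane_posetI)
  fix x y z
  show "finite (pcar (restr P S))"
    using plane_poset_finite[OF P] by (simp add: restr_def)
  show "hle (restr P S) x y \<Longrightarrow> x \<in> pcar (restr P S) \<and> y \<in> pcar (restr P S)"
    "rle (restr P S) x y \<Longrightarrow> x \<in> pcar (restr P S) \<and> y \<in> pcar (restr P S)"
    using hle_carrier[OF P] rle_carrier[OF P] by (auto simp: restr_def)
  show "x \<in> pcar (restr P S) \<Longrightarrow> hle (restr P S) x x"
    "x \<in> pcar (restr P S) \<Longrightarrow> rle (restr P S) x x"
    using hle_refl[OF P] rle_refl[OF P] by (auto simp: restr_def)
  show "hle (restr P S) x y \<Longrightarrow> hle (restr P S) y z \<Longrightarrow> hle (restr P S) x z"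
    "rle (restr P S) x y \<Longrightarrow> rle (restr P S) y z \<Longrightarrow> rle (restr P S) x z"
    using hle_trans[OF P] rle_trans[OF P] by (auto simp: restr_def)
  show "hle (restr P S) x y \<Longrightarrow> hle (restr P S) y x \<Longrightarrow> x = y"
    "rle (restr P S) x y \<Longrightarrow> rle (restr P S) y x \<Longrightarrow> x = y"
    using hle_antisym[OF P] rle_antisym[OF P] by (auto simp: restr_def)
  show "x \<in> pcar (restr P S) \<Longrightarrow> y \<in> pcar (restr P S) \<Longrightarrow> x \<noteq> y \<Longrightarrow>
      (hle (restr P S) x y \<or> hle (restr P S) y x) \<longleftrightarrow> \<not> (rle (restr P S) x y \<or> rle (restr P S) y x)"
    using hle_comparable_iff[OF P] by (auto simp: restr_def)
qed

lemma pp_isomorphism_pp_prod: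
  assumes f: "pp_isomorphism f A A'" and g: "pp_isomorphism g B B'"
  shows "pp_isomorphism (map_sum f g) (pp_prod A B) (pp_prod A' B')"
proof -
  have bf: "bij_betw f (pcar A) (pcar A')" and bg: "bij_betw g (pcar B) (pcar B')"
    and rf: "\<And>x y. x \<in> pcar A \<Longrightarrow> y \<in> pcar A \<Longrightarrow>
               (hle A x y \<longleftrightarrow> hle A' (f x) (f y)) \<and> (rle A x y \<longleftrightarrow> rle A' (f x) (f y))"
    and rg: "\<And>x y. x \<in> pcar B \<Longrightarrow> y \<in> pcar B \<Longrightarrow>
               (hle B x y \<longleftrightarrow> hle B' (g x) (g y)) \<and> (rle B x y \<longleftrightarrow> rle B' (g x) (g y))"
    using f g unfolding pp_isomorphism_def by blast+
  have "bij_betw (map_sum f g) (pcar (pp_prod A B)) (pcar (pp_prod A' B'))"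
    unfolding bij_betw_def
  proof
    have "inj_on f (pcar A)" "inj_on g (pcar B)"
      using bf bg unfolding bij_betw_def by blast+
    then show "inj_on (map_sum f g) (pcar (pp_prod A B))"
      unfolding pcar_pp_prod by (auto intro!: inj_onI dest: inj_onD)
    have "f ` pcar A = pcar A'" "g ` pcar B = pcar B'"
      using bf bg unfolding bij_betw_def by blast+
    moreover have "map_sum f g ` Inl ` X = Inl ` f ` X" "map_sum f g ` Inr ` Y = Inr ` g ` Y" for X Y
      by (simp_all add: image_comp map_sum_o_inj)
    ultimately show "map_sum f g ` pcar (pp_prod A B) = pcar (pp_prod A' B')"
      unfolding pcar_pp_prod image_Un by simp
  qed
  moreover have "(hle (pp_prod A B) u v \<longleftrightarrow> hle (pp_prod A' B') (map_sum f g u) (map_sum f g v)) \<and>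
      (rle (pp_prod A B) u v \<longleftrightarrow> rle (pp_prod A' B') (map_sum f g u) (map_sum f g v))"
    if "u \<in> pcar (pp_prod A B)" "v \<in> pcar (pp_prod A B)" for u v
    using that unfolding pcar_pp_prod
    by (elim UnE imageE) (simp_all add: rf rg bij_betwE[OF bf] bij_betwE[OF bg])
  ultimately show ?thesis unfolding pp_isomorphism_def by blast
qed

lemma pp_isomorphism_Inl: "pp_isomorphism Inl P (restr (pp_prod P Q) (Inl ` pcar P))"
  unfolding pp_isomorphism_def bij_betw_def by (auto simp: restr_def pcar_pp_prod)

lemma pp_isomorphism_Inr: "pp_isomorphism Inr Q (restr (pp_prod P Q) (Inr ` pcar Q))"
  unfolding pp_isomorphism_def bij_betw_def by (auto simp: restr_def pcar_pp_prod)

section \<open>The coproduct Delta_0 as deconcatenation\<close>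

text \<open>The cuts I with P = (P - I) I.\<close>

definition product_cut :: "'a plane_poset \<Rightarrow> 'a set \<Rightarrow> bool" where
  "product_cut P I \<longleftrightarrow> I \<subseteq> pcar P \<and> (\<forall>x\<in>pcar P - I. \<forall>y\<in>I. rle P x y)"

lemma hcount_eq_0_iff:
  assumes P: "plane_poset P"
  shows "hcount P A B = 0 \<longleftrightarrow> (\<forall>x\<in>A. \<forall>y\<in>B. hle P x y \<longrightarrow> x = y)"
proof -
  have "{(x, y). x \<in> A \<and> y \<in> B \<and> hle P x y \<and> x \<noteq> y} \<subseteq> pcar P \<times> pcar P"
    using hle_carrier[OF P] by blast
  then have "finite {(x, y). x \<in> A \<and> y \<in> B \<and> hle P x y \<and> x \<noteq> y}"
    using plane_poset_finite[OF P] finite_subset by blast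
  then show ?thesis unfolding hcount_def by auto
qed

lemma product_cut_relations:
  assumes P: "plane_poset P" and I: "product_cut P I" and x: "x \<in> pcar P - I" and y: "y \<in> I"
  shows "rle P x y \<and> \<not> rle P y x \<and> \<not> hle P x y \<and> \<not> hle P y x"
proof -
  have "rle P x y" using I x y unfolding product_cut_def by blast
  moreover have "x \<noteq> y" using x y by blast
  ultimately show ?thesis
    using rle_antisym[OF P] hle_imp_not_rle[OF P] by blast
qed

lemma product_cut_iff:
  assumes P: "plane_poset P"
  shows "biideal P I \<and> hcount P (pcar P - I) I = 0 \<longleftrightarrow> product_cut P I"
proof
  assume "biideal P I \<and> hcount P (pcar P - I) I = 0"
  then have sub: "I \<subseteq> pcar P"
    and up: "\<And>x y. x \<in> I \<Longrightarrow> y \<in> pcar P \<Longrightarrow> hle P x y \<or> rle P x y \<Longrightarrow> y \<in> I"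
    and no_h: "\<And>x y. x \<in> pcar P - I \<Longrightarrow> y \<in> I \<Longrightarrow> hle P x y \<Longrightarrow> x = y"
    unfolding biideal_def hcount_eq_0_iff[OF P] by blast+
  have "rle P x y" if x: "x \<in> pcar P - I" and y: "y \<in> I" for x y
  proof -
    have "x \<noteq> y" "y \<in> pcar P" using x y sub by auto
    moreover have "\<not> hle P x y" "\<not> hle P y x" "\<not> rle P y x"
      using x y no_h up by blast+
    ultimately show ?thesis
      using x hle_comparable_iff[OF P] by blast
  qed
  then show "product_cut P I" unfolding product_cut_def using sub by blast
next
  assume I: "product_cut P I"
  then show "biideal P I \<and> hcount P (pcar P - I) I = 0"
    unfolding biideal_def hcount_eq_0_iff[OF P] product_cut_def
    using product_cut_relations[OF P I] by blast
qed

lemma product_cut_chain: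
  assumes P: "plane_poset P" and I: "product_cut P I" and J: "product_cut P J"
  shows "I \<subseteq> J \<or> J \<subseteq> I"
proof (rule ccontr)
  assume "\<not> (I \<subseteq> J \<or> J \<subseteq> I)"
  then obtain x y where x: "x \<in> I" "x \<notin> J" and y: "y \<in> J" "y \<notin> I" by blast
  have "rle P x y" "rle P y x"
    using I J x y unfolding product_cut_def by blast+
  then show False using rle_antisym[OF P] x y by blast
qed

lemma product_cut_eqI:
  assumes P: "plane_poset P" and I: "product_cut P I" and J: "product_cut P J"
    and card: "card (pcar P - I) = card (pcar P - J)"
  shows "I = J"
proof -
  have sub: "I \<subseteq> pcar P" "J \<subseteq> pcar P"
    using I J unfolding product_cut_def by blast+
  have fin: "finite (pcar P - I)" "finite (pcar P - J)"
    using plane_poset_finite[OF P] by blast+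
  from product_cut_chain[OF P I J] have "pcar P - I = pcar P - J"
    using card fin by (metis Diff_mono card_subset_eq order_refl)
  then show ?thesis using sub by blast
qed

lemma pp_isomorphism_product_cut:
  assumes P: "plane_poset P" and I: "product_cut P I"
  shows "pp_isomorphism (case_sum id id) (pp_prod (restr P (pcar P - I)) (restr P I)) P"
proof -
  let ?R = "pp_prod (restr P (pcar P - I)) (restr P I)"
  have sub: "I \<subseteq> pcar P" using I unfolding product_cut_def by blast
  have car: "pcar ?R = Inl ` (pcar P - I) \<union> Inr ` I"
    using sub by (auto simp: pcar_pp_prod restr_def)
  have "inj_on (case_sum id id) (pcar ?R)"
    unfolding car by (auto intro!: inj_onI)
  moreover have "case_sum id id ` pcar ?R = pcar P"
    unfolding car image_Un image_image using sub by auto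
  ultimately have "bij_betw (case_sum id id) (pcar ?R) (pcar P)"
    unfolding bij_betw_def by blast
  moreover have "(hle ?R u v \<longleftrightarrow> hle P (case_sum id id u) (case_sum id id v)) \<and>
      (rle ?R u v \<longleftrightarrow> rle P (case_sum id id u) (case_sum id id v))"
    if "u \<in> pcar ?R" "v \<in> pcar ?R" for u v
    using that product_cut_relations[OF P I] sub unfolding car
    by (elim UnE imageE) (auto simp: restr_def)
  ultimately show ?thesis unfolding pp_isomorphism_def by blast
qed

lemma product_cut_image:
  assumes f: "pp_isomorphism f X Y" and J: "product_cut X J"
  shows "product_cut Y (f ` J)"
proof -
  have bij: "bij_betw f (pcar X) (pcar Y)"
    and rel: "\<And>x y. x \<in> pcar X \<Longrightarrow> y \<in> pcar X \<Longrightarrow> rle Y (f x) (f y) \<longleftrightarrow> rle X x y"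
    using f unfolding pp_isomorphism_def by blast+
  have sub: "J \<subseteq> pcar X" and below: "\<And>x y. x \<in> pcar X - J \<Longrightarrow> y \<in> J \<Longrightarrow> rle X x y"
    using J unfolding product_cut_def by blast+
  have inj: "inj_on f (pcar X)" and surj: "f ` pcar X = pcar Y"
    using bij unfolding bij_betw_def by blast+
  have "pcar Y - f ` J = f ` (pcar X - J)"
    unfolding surj[symmetric] using inj_on_image_set_diff[OF inj _ sub] by blast
  moreover have "f ` J \<subseteq> pcar Y"
    unfolding surj[symmetric] using sub by blast
  ultimately show ?thesis
    unfolding product_cut_def using rel below sub by auto
qed

lemma product_cut_Inr: "product_cut (pp_prod P Q) (Inr ` pcar Q)"
  unfolding product_cut_def pcar_pp_prod by auto

lemma product_cut_of_pp_iso_pp_prod: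
  assumes iso: "pp_iso (pp_prod P1 P2) P"
  obtains I where "product_cut P I" "pp_iso P1 (restr P (pcar P - I))" "pp_iso P2 (restr P I)"
proof -
  obtain f where f: "pp_isomorphism f (pp_prod P1 P2) P"
    using iso pp_iso_iff_isomorphism by blast
  have inj: "inj_on f (pcar (pp_prod P1 P2))" and surj: "f ` pcar (pp_prod P1 P2) = pcar P"
    using f unfolding pp_isomorphism_def bij_betw_def by blast+
  define I where "I = f ` Inr ` pcar P2"
  have "pcar P - I = f ` (pcar (pp_prod P1 P2) - Inr ` pcar P2)"
    unfolding I_def surj[symmetric]
    by (rule inj_on_image_set_diff[OF inj, symmetric]) (auto simp: pcar_pp_prod)
  also have "\<dots> = f ` Inl ` pcar P1"
    unfolding pcar_pp_prod by auto
  finally have complement: "pcar P - I = f ` Inl ` pcar P1" .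
  have "pp_isomorphism (f \<circ> Inl) P1 (restr P (pcar P - I))"
    unfolding complement
    by (rule pp_isomorphism_comp[OF pp_isomorphism_Inl pp_isomorphism_restr[OF f]])
      (auto simp: pcar_pp_prod restr_def)
  moreover have "pp_isomorphism (f \<circ> Inr) P2 (restr P I)"
    unfolding I_def
    by (rule pp_isomorphism_comp[OF pp_isomorphism_Inr pp_isomorphism_restr[OF f]])
      (auto simp: pcar_pp_prod restr_def)
  moreover have "product_cut P I"
    unfolding I_def by (rule product_cut_image[OF f product_cut_Inr])
  ultimately show ?thesis
    using that unfolding pp_iso_iff_isomorphism by blast
qed

definition cut_factors :: "'a plane_poset \<Rightarrow> 'a set \<Rightarrow> nat plane_poset \<times> nat plane_poset" where
  "cut_factors P I = (canon (restr P (pcar P - I)), canon (restr P I))"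

lemma cut_factors_image:
  assumes P: "plane_poset P"
  shows "cut_factors P ` {I. product_cut P I} =
    {(P1, P2). canonical P1 \<and> canonical P2 \<and> pp_iso (pp_prod P1 P2) P}"
proof (intro equalityI subsetI)
  fix Z assume "Z \<in> cut_factors P ` {I. product_cut P I}"
  then obtain I where I: "product_cut P I" and Z: "Z = cut_factors P I" by blast
  let ?P1 = "restr P (pcar P - I)" and ?P2 = "restr P I"
  have "pp_iso (pp_prod (canon ?P1) (canon ?P2)) P"
    using pp_isomorphism_pp_prod pp_isomorphism_product_cut[OF P I]
      pp_iso_canon[OF plane_poset_restr[OF P]] pp_iso_trans
    unfolding pp_iso_iff_isomorphism by meson
  then show "Z \<in> {(P1, P2). canonical P1 \<and> canonical P2 \<and> pp_iso (pp_prod P1 P2) P}"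
    unfolding Z cut_factors_def using canonical_canon[OF plane_poset_restr[OF P]] by simp
next
  fix Z assume "Z \<in> {(P1, P2). canonical P1 \<and> canonical P2 \<and> pp_iso (pp_prod P1 P2) P}"
  then obtain P1 P2 where Z: "Z = (P1, P2)" and can: "canonical P1" "canonical P2"
    and iso: "pp_iso (pp_prod P1 P2) P" by blast
  obtain I where "product_cut P I" "pp_iso P1 (restr P (pcar P - I))" "pp_iso P2 (restr P I)"
    using product_cut_of_pp_iso_pp_prod[OF iso] .
  then show "Z \<in> cut_factors P ` {I. product_cut P I}"
    unfolding Z using canon_eqI can by (force simp: cut_factors_def)
qed

lemma inj_on_cut_factors:
  assumes P: "plane_poset P"
  shows "inj_on (cut_factors P) {I. product_cut P I}"
proof (rule inj_onI)
  fix I J assume I: "I \<in> {I. product_cut P I}" and J: "J \<in> {I. product_cut P I}"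
    and eq: "cut_factors P I = cut_factors P J"
  have card: "card (pcar (fst (cut_factors P K))) = card (pcar P - K)" for K
  proof -
    have "pcar (restr P (pcar P - K)) = pcar P - K" by (auto simp: restr_def)
    then show ?thesis
      using pp_iso_card[OF pp_iso_canon[OF plane_poset_restr[OF P]], of "pcar P - K"]
      by (simp add: cut_factors_def)
  qed
  show "I = J"
    using product_cut_eqI[OF P] I J card[of I] card[of J] eq by simp
qed

theorem delta0_eq_deconc:
  assumes P: "plane_poset P"
  shows "(delta0 P :: _ \<Rightarrow> 'k::field) = deconc P"
proof
  fix XY :: "nat plane_poset \<times> nat plane_poset"
  obtain X Y where XY: "XY = (X, Y)" by (cases XY)
  have fin: "finite {I. biideal P I}"
    by (rule finite_subset[of _ "Pow (pcar P)"]) (auto simp: biideal_def plane_poset_finite[OF P])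
  have cuts: "{I. product_cut P I} \<subseteq> {I. biideal P I}"
    using product_cut_iff[OF P] by blast
  have "delta0 P XY = (\<Sum>I\<in>{I. biideal P I}.
      if cut_factors P I = XY then (0::'k) ^ hcount P (pcar P - I) I else 0)"
    by (simp add: XY delta0_def cut_factors_def)
  \<comment> \<open>The weight 0 ^ hcount kills exactly the biideals that are not product cuts.\<close>
  also have "\<dots> = (\<Sum>I\<in>{I. product_cut P I}. if cut_factors P I = XY then 1 else 0)"
    by (rule sum.mono_neutral_cong_right[OF fin cuts])
      (auto simp: product_cut_iff[OF P, symmetric] power_0_left)
  also have "\<dots> = (\<Sum>Z\<in>cut_factors P ` {I. product_cut P I}. if Z = XY then 1 else 0)"
    by (simp add: sum.reindex[OF inj_on_cut_factors[OF P]])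
  also have "\<dots> = deconc P XY"
    unfolding cut_factors_image[OF P] deconc_def by (rule sum.cong) auto
  finally show "(delta0 P XY :: 'k) = deconc P XY" .
qed

section \<open>The pairing\<close>

lemma theta_carrier_rank:
  assumes P: "plane_poset P" and Q: "plane_poset Q" and card: "card (pcar P) = card (pcar Q)"
    and x: "x \<in> pcar P"
  shows "theta P Q x \<in> pcar Q \<and> rank Q (theta P Q x) = rank P x"
proof -
  have "rank P x \<in> rank Q ` pcar Q"
    using bij_betwE[OF rank_bij[OF P]] x card bij_betw_imp_surj_on[OF rank_bij[OF Q]] by auto
  then have "\<exists>!y. y \<in> pcar Q \<and> rank Q y = rank P x"
    using inj_on_rank[OF Q] by (auto simp: inj_on_def)
  then show ?thesis
    unfolding theta_def by (rule theI')
qed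

lemma bij_betw_theta:
  assumes P: "plane_poset P" and Q: "plane_poset Q" and card: "card (pcar P) = card (pcar Q)"
  shows "bij_betw (theta P Q) (pcar P) (pcar Q)"
proof -
  have "inj_on (theta P Q) (pcar P)"
    using theta_carrier_rank[OF P Q card] inj_on_rank[OF P] by (metis inj_on_def)
  then show ?thesis
    using theta_carrier_rank[OF P Q card] bij_betw_same_card card plane_poset_finite[OF Q]
    by (metis bij_betw_def card_image card_subset_eq image_subsetI)
qed

lemma tle_theta_iff:
  assumes P: "plane_poset P" and Q: "plane_poset Q" and card: "card (pcar P) = card (pcar Q)"
    and x: "x \<in> pcar P" and y: "y \<in> pcar P"
  shows "tle Q (theta P Q x) (theta P Q y) \<longleftrightarrow> tle P x y"
  using rank_le_iff[OF P x y] rank_le_iff[OF Q] theta_carrier_rank[OF P Q card] x y by metis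

lemma theta_iota: "theta (iota P) Q = theta P Q"
proof -
  have "tle (iota P) = tle P" unfolding tle_def iota_def by (auto intro!: ext)
  then have "rank (iota P) = rank P" unfolding rank_def by (simp add: iota_def)
  then show ?thesis unfolding theta_def by simp
qed

lemma pp_le_iota_iff:
  "pp_le (iota P) Q \<longleftrightarrow> card (pcar P) = card (pcar Q) \<and>
     (\<forall>x\<in>pcar P. \<forall>y\<in>pcar P. hle Q (theta P Q x) (theta P Q y) \<longrightarrow> rle P x y)"
  unfolding pp_le_def theta_iota by (simp add: iota_def)

lemma phi_eq_0_iff:
  assumes P: "plane_poset P"
  shows "phi P Q = 0 \<longleftrightarrow> (\<forall>x\<in>pcar P. \<forall>y\<in>pcar P. x \<noteq> y \<longrightarrow> theta P Q x \<noteq> theta P Q y \<longrightarrow>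
     \<not> (rle P x y \<and> hle Q (theta P Q x) (theta P Q y)) \<and>
     \<not> (hle P x y \<and> rle Q (theta P Q x) (theta P Q y)))"
proof -
  have "finite {(x, y). x \<in> pcar P \<and> y \<in> pcar P \<and> R x y}" for R
    by (rule finite_subset[of _ "pcar P \<times> pcar P"]) (auto simp: plane_poset_finite[OF P])
  then show ?thesis unfolding phi_def by auto
qed

lemma pairing0_ne_0_imp_h_antichains:
  assumes P: "plane_poset P" and Q: "plane_poset Q" and ne: "(pairing0 P Q :: 'k::field) \<noteq> 0"
  shows "card (pcar P) = card (pcar Q) \<and> h_antichain P \<and> h_antichain Q"
proof -
  have le: "pp_le (iota P) Q" and "(0::'k) ^ phi P Q \<noteq> 0"
    using ne unfolding pairing0_def by (auto split: if_splits)
  then have "phi P Q = 0" by (simp add: power_0_left split: if_splits)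
  then have no_cross: "\<And>x y. x \<in> pcar P \<Longrightarrow> y \<in> pcar P \<Longrightarrow> x \<noteq> y \<Longrightarrow> theta P Q x \<noteq> theta P Q y \<Longrightarrow>
      \<not> (rle P x y \<and> hle Q (theta P Q x) (theta P Q y)) \<and> \<not> (hle P x y \<and> rle Q (theta P Q x) (theta P Q y))"
    unfolding phi_eq_0_iff[OF P] by blast
  have card: "card (pcar P) = card (pcar Q)"
    and h_to_r: "\<And>x y. x \<in> pcar P \<Longrightarrow> y \<in> pcar P \<Longrightarrow> hle Q (theta P Q x) (theta P Q y) \<Longrightarrow> rle P x y"
    using le unfolding pp_le_iota_iff by blast+
  have bij: "bij_betw (theta P Q) (pcar P) (pcar Q)"
    using bij_betw_theta[OF P Q card] .
  have "x = y" if h: "hle P x y" for x y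
  proof (rule ccontr)
    assume ne: "x \<noteq> y"
    have xy: "x \<in> pcar P" "y \<in> pcar P" using hle_carrier[OF P h] by auto
    then have "theta P Q x \<noteq> theta P Q y"
      using ne bij unfolding bij_betw_def by (metis inj_on_eq_iff)
    moreover have "tle Q (theta P Q x) (theta P Q y)"
      using tle_theta_iff[OF P Q card xy] h unfolding tle_def by blast
    ultimately show False
      using no_cross[OF xy ne] h_to_r[OF xy] hle_imp_not_rle[OF P h ne] h unfolding tle_def by blast
  qed
  moreover have "u = v" if h: "hle Q u v" for u v
  proof (rule ccontr)
    assume ne: "u \<noteq> v"
    obtain x y where xy: "x \<in> pcar P" "y \<in> pcar P" and u: "u = theta P Q x" and v: "v = theta P Q y"
      using hle_carrier[OF Q h] bij_betw_imp_surj_on[OF bij] by (metis imageE)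
    then show False
      using no_cross[OF xy] h_to_r[OF xy] h ne by blast
  qed
  ultimately show ?thesis using card unfolding h_antichain_def by blast
qed

lemma pairing0_h_antichains:
  assumes P: "plane_poset P" and Q: "plane_poset Q" and card: "card (pcar P) = card (pcar Q)"
    and hP: "h_antichain P" and hQ: "h_antichain Q"
  shows "(pairing0 P Q :: 'k::field) = 1"
proof -
  have "inj_on (theta P Q) (pcar P)"
    using bij_betw_theta[OF P Q card] unfolding bij_betw_def by blast
  then have "pp_le (iota P) Q"
    using card hQ rle_refl[OF P] unfolding pp_le_iota_iff h_antichain_def by (metis inj_onD)
  moreover have "phi P Q = 0"
    using hP hQ unfolding phi_eq_0_iff[OF P] h_antichain_def by blast
  ultimately show ?thesis unfolding pairing0_def by simp
qed

lemma pairing0_ne_0_iff: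
  assumes P: "plane_poset P" and Q: "plane_poset Q"
  shows "(pairing0 P Q :: 'k::field) \<noteq> 0 \<longleftrightarrow> (\<exists>n. pp_iso P (dots n) \<and> pp_iso Q (dots n))"
  using pairing0_ne_0_imp_h_antichains[OF P Q] pairing0_h_antichains[OF P Q, where 'k='k]
  unfolding pp_iso_dots_iff[OF P] pp_iso_dots_iff[OF Q] by auto

lemma is_dot_canonical_iff:
  assumes P: "canonical P"
  shows "is_dot P \<longleftrightarrow> (\<exists>n. P = dots n)"
proof
  assume "is_dot P"
  then obtain n where "pp_iso P (dots n)" unfolding is_dot_def by blast
  then show "\<exists>n. P = dots n" using canonical_unique[OF P canonical_dots] by blast
qed (auto simp: is_dot_def intro: pp_iso_refl)

lemma is_dot_canon_iff:
  assumes R: "plane_poset R"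
  shows "is_dot (canon R) \<longleftrightarrow> is_dot R"
proof -
  have "pp_iso (canon R) R" "pp_iso R (canon R)"
    using pp_iso_canon[OF R] pp_iso_sym by blast+
  then show ?thesis unfolding is_dot_def by (meson pp_iso_trans)
qed

lemma pairing0_dots_canonical:
  assumes P: "canonical P"
  shows "(pairing0 P (dots n) :: 'k::field) = (if P = dots n then 1 else 0)"
proof (cases "P = dots n")
  case True
  then show ?thesis
    using pairing0_h_antichains plane_poset_dots pp_iso_dots_iff pp_iso_refl by fastforce
next
  case False
  have "\<not> pp_iso P (dots n)"
    using False canonical_unique[OF P canonical_dots] by blast
  then have "(pairing0 P (dots n) :: 'k) = 0"
    using pairing0_ne_0_iff[OF canonical_plane_poset[OF P] plane_poset_dots]
      pp_iso_dots_iff[OF plane_poset_dots] by (metis pp_iso_sym pp_iso_trans)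
  then show ?thesis using False by simp
qed

lemma pairing0_non_dot:
  assumes "plane_poset P" and "plane_poset Q" and "\<not> is_dot P \<or> \<not> is_dot Q"
  shows "(pairing0 P Q :: 'k::field) = 0"
proof (rule ccontr)
  assume "(pairing0 P Q :: 'k) \<noteq> 0"
  then obtain n where "pp_iso P (dots n)" "pp_iso Q (dots n)"
    using pairing0_ne_0_iff[OF assms(1,2)] by blast
  then show False using assms(3) unfolding is_dot_def by blast
qed

section \<open>The kernel of the pairing\<close>

lemma sum_times_delta:
  assumes "finite S"
  shows "(\<Sum>P\<in>S. c P * (if R = P then 1 else 0)) = (if R \<in> S then c R else (0::'k::field))"
proof -
  have "(\<Sum>P\<in>S. c P * (if R = P then 1 else 0)) = (\<Sum>P\<in>S. if R = P then c P else 0)"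
    by (rule sum.cong) auto
  then show ?thesis using assms by simp
qed

lemma span_nondots_iff:
  "(v :: nat plane_poset \<Rightarrow> 'k::field) \<in> span_nondots \<longleftrightarrow> v \<in> hpp \<and> (\<forall>P\<in>supp v. \<not> is_dot P)"
proof
  assume "v \<in> span_nondots"
  then obtain S c where S: "finite S" "\<forall>P\<in>S. canonical P \<and> \<not> is_dot P"
    and v: "v = (\<lambda>R. \<Sum>P\<in>S. c P * (if R = P then 1 else 0))"
    unfolding span_nondots_def by blast
  have "supp v \<subseteq> S"
    unfolding supp_def v sum_times_delta[OF S(1)] by auto
  then show "v \<in> hpp \<and> (\<forall>P\<in>supp v. \<not> is_dot P)"
    using S finite_subset unfolding hpp_def by blast
next
  assume v: "v \<in> hpp \<and> (\<forall>P\<in>supp v. \<not> is_dot P)"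
  then have "finite (supp v)" unfolding hpp_def by blast
  then have "v = (\<lambda>R. \<Sum>P\<in>supp v. v P * (if R = P then 1 else 0))"
    by (auto simp: sum_times_delta supp_def)
  then show "v \<in> span_nondots"
    using v unfolding span_nondots_def hpp_def by blast
qed

lemma kernel0_subset_span_nondots: "(kernel0 :: (nat plane_poset \<Rightarrow> 'k::field) set) \<subseteq> span_nondots"
proof
  fix v :: "nat plane_poset \<Rightarrow> 'k" assume "v \<in> kernel0"
  then have v: "v \<in> hpp" and ker: "\<And>w. w \<in> hpp \<Longrightarrow> pairing0_ext v w = 0"
    unfolding kernel0_def by blast+
  have fin: "finite (supp v)" and can: "\<And>P. P \<in> supp v \<Longrightarrow> canonical P"
    using v unfolding hpp_def by blast+
  have "v (dots n) = 0" for n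
  proof -
    define w :: "nat plane_poset \<Rightarrow> 'k" where "w = (\<lambda>R. if R = dots n then 1 else 0)"
    have supp_w: "supp w = {dots n}" unfolding supp_def w_def by auto
    then have "w \<in> hpp" unfolding hpp_def using canonical_dots by auto
    \<comment> \<open>Pairing against the basis vector of dots n picks out the coefficient of dots n.\<close>
    have "pairing0_ext v w = (\<Sum>P\<in>supp v. if dots n = P then v P else 0)"
      unfolding pairing0_ext_def supp_w using can
      by (intro sum.cong) (auto simp: w_def pairing0_dots_canonical)
    also have "\<dots> = v (dots n)"
      using fin by (simp add: sum.delta supp_def)
    finally show ?thesis using ker[OF \<open>w \<in> hpp\<close>] by simp
  qed
  then have "\<forall>P\<in>supp v. \<not> is_dot P"
    using can is_dot_canonical_iff unfolding supp_def by fastforce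
  then show "v \<in> span_nondots" using v span_nondots_iff by blast
qed

lemma span_nondots_subset_kernel0: "(span_nondots :: (nat plane_poset \<Rightarrow> 'k::field) set) \<subseteq> kernel0"
proof
  fix v :: "nat plane_poset \<Rightarrow> 'k" assume "v \<in> span_nondots"
  then have v: "v \<in> hpp" and nd: "\<forall>P\<in>supp v. \<not> is_dot P"
    using span_nondots_iff by blast+
  have "pairing0_ext v w = 0 \<and> pairing0_ext w v = 0" if w: "w \<in> hpp" for w
  proof -
    have plane: "plane_poset P" if "P \<in> supp v \<union> supp w" for P
      using that v w canonical_plane_poset unfolding hpp_def by blast
    have "(pairing0 P Q :: 'k) = 0 \<and> (pairing0 Q P :: 'k) = 0" if "P \<in> supp v" "Q \<in> supp w" for P Q
      using that nd plane pairing0_non_dot by blast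
    then show ?thesis
      unfolding pairing0_ext_def by (auto intro!: sum.neutral)
  qed
  then show "v \<in> kernel0" unfolding kernel0_def using v by blast
qed

theorem kernel0_eq_span_nondots: "(kernel0 :: (nat plane_poset \<Rightarrow> 'k::field) set) = span_nondots"
  using kernel0_subset_span_nondots span_nondots_subset_kernel0 by blast

lemma h_antichain_pp_prodD: "h_antichain (pp_prod P Q) \<Longrightarrow> h_antichain P \<and> h_antichain Q"
  unfolding h_antichain_def by (metis hle_pp_prod(1,2) sum.inject(1,2))

lemma hmult_in_span_nondots:
  fixes v w :: "nat plane_poset \<Rightarrow> 'k::field"
  assumes v: "v \<in> hpp" and w: "w \<in> hpp"
    and nd: "(\<forall>P\<in>supp v. \<not> is_dot P) \<or> (\<forall>Q\<in>supp w. \<not> is_dot Q)"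
  shows "hmult v w \<in> span_nondots"
proof -
  have plane: "plane_poset P" if "P \<in> supp v \<union> supp w" for P
    using that v w canonical_plane_poset unfolding hpp_def by blast
  define S where "S = (\<lambda>(P, Q). canon (pp_prod P Q)) ` (supp v \<times> supp w)"
  have "finite S" unfolding S_def using v w unfolding hpp_def by simp
  moreover have "supp (hmult v w) \<subseteq> S"
  proof
    fix R assume R: "R \<in> supp (hmult v w)"
    show "R \<in> S"
    proof (rule ccontr)
      assume "R \<notin> S"
      then have "hmult v w R = 0"
        unfolding hmult_def S_def by (auto intro!: sum.neutral)
      with R show False unfolding supp_def by simp
    qed
  qed
  moreover have "canonical R \<and> \<not> is_dot R" if "R \<in> S" for R
  proof -
    obtain P Q where PQ: "P \<in> supp v" "Q \<in> supp w" and R: "R = canon (pp_prod P Q)"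
      using \<open>R \<in> S\<close> unfolding S_def by auto
    have pP: "plane_poset P" and pQ: "plane_poset Q"
      using plane PQ by blast+
    have pPQ: "plane_poset (pp_prod P Q)"
      using plane_poset_pp_prod[OF pP pQ] .
    have "\<not> is_dot (pp_prod P Q)"
      using nd PQ h_antichain_pp_prodD[of P Q] is_dot_iff_h_antichain[OF pPQ]
        is_dot_iff_h_antichain[OF pP] is_dot_iff_h_antichain[OF pQ] by blast
    then show ?thesis
      unfolding R using canonical_canon[OF pPQ] is_dot_canon_iff[OF pPQ] by blast
  qed
  ultimately show ?thesis
    unfolding span_nondots_iff hpp_def using finite_subset by blast
qed

theorem span_nondots_two_sided_ideal:
  fixes v w :: "nat plane_poset \<Rightarrow> 'k::field"
  assumes v: "v \<in> span_nondots" and w: "w \<in> hpp"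
  shows "hmult v w \<in> span_nondots \<and> hmult w v \<in> span_nondots"
proof -
  have "v \<in> hpp" "\<forall>P\<in>supp v. \<not> is_dot P"
    using v span_nondots_iff by blast+
  then show ?thesis
    using hmult_in_span_nondots w by blast
qed

theorem proposition25:
  shows "(\<forall>P :: 'a plane_poset. plane_poset P \<longrightarrow> (delta0 P :: _ \<Rightarrow> 'k::field) = deconc P)
    \<and> (\<forall>(P :: 'b plane_poset) (Q :: 'c plane_poset). plane_poset P \<and> plane_poset Q \<longrightarrow>
          ((pairing0 P Q :: 'k) \<noteq> 0 \<longleftrightarrow> (\<exists>n. pp_iso P (dots n) \<and> pp_iso Q (dots n))))
    \<and> (kernel0 :: (nat plane_poset \<Rightarrow> 'k) set) = span_nondots
    \<and> (\<forall>v \<in> (span_nondots :: (nat plane_poset \<Rightarrow> 'k) set). \<forall>w \<in> hpp.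
          hmult v w \<in> span_nondots \<and> hmult w v \<in> span_nondots)"
proof (intro conjI allI impI ballI)
  show "(delta0 P :: _ \<Rightarrow> 'k) = deconc P" if "plane_poset P" for P :: "'a plane_poset"
    using delta0_eq_deconc[OF that] .
  show "(pairing0 P Q :: 'k) \<noteq> 0 \<longleftrightarrow> (\<exists>n. pp_iso P (dots n) \<and> pp_iso Q (dots n))"
    if "plane_poset P \<and> plane_poset Q" for P :: "'b plane_poset" and Q :: "'c plane_poset"
    using pairing0_ne_0_iff that by blast
qed (simp_all add: kernel0_eq_span_nondots span_nondots_two_sided_ideal)

end
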